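(* Let $X, Y \subseteq \omega$. There exists an embedding $\mathcal{K}_1^X \hookrightarrow \mathcal{K}_2^Y$ if and only if $X \le_T Y$.
   Context: A pca is a set with a partial binary application operation containing distinct $\mathrm{s},\mathrm{k}$ with $\mathrm{k}ab\downarrow=a$, $\mathrm{s}ab\downarrow$, $\mathrm{s}abc\simeq(ac)(bc)$. An embedding of pcas is an injective map $f$ with: if $ab$ is defined then $f(a)f(b)$ is defined and equals $f(ab)$. $\mathcal{K}_1^X$ is the pca on $\omega$ with $n\cdot m=\Phi^X_n(m)$, the $n$-th partial $X$-computable function applied to $m$. $\mathcal{K}_2^Y$ (in the coding used here): elements are the total $Y$-computable functions $g:\omega\to\omega$, with $g\cdot h$ the function $n\mapsto\Phi^{g\oplus h}_{g(0)}(n)$ ($\Phi_e$ the $e$-th Turing functional, $(g\oplus h)(2n)=g(n)$, $(g\oplus h)(2n+1)=h(n)$), defined if and only if this function is total. *)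

theory Defs
  imports Main "HOL-Library.Nat_Bijection"
begin

text \<open>Oracle mu-recursive programs (function oracles nat => nat), as a concrete
  model of (relativised) Turing computation.\<close>

datatype recf = Z | S | Proj nat | Comp recf "recf list" | Prec recf recf | Mn recf | Orc

primrec code :: "recf \<Rightarrow> nat" where
  "code Z = prod_encode (0, 0)"
| "code S = prod_encode (1, 0)"
| "code (Proj i) = prod_encode (2, i)"
| "code (Comp f gs) = prod_encode (3, prod_encode (code f, list_encode (map code gs)))"
| "code (Prec f g) = prod_encode (4, prod_encode (code f, code g))"
| "code (Mn f) = prod_encode (5, code f)"
| "code Orc = prod_encode (6, 0)"

inductive eval :: "(nat \<Rightarrow> nat) \<Rightarrow> recf \<Rightarrow> nat list \<Rightarrow> nat \<Rightarrow> bool"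
  for A :: "nat \<Rightarrow> nat" where
  eval_Z: "eval A Z xs 0"
| eval_S: "eval A S (x # xs) (Suc x)"
| eval_Proj: "i < length xs \<Longrightarrow> eval A (Proj i) xs (xs ! i)"
| eval_Comp: "length ys = length gs \<Longrightarrow> (\<forall>i < length gs. eval A (gs ! i) xs (ys ! i))
     \<Longrightarrow> eval A f ys z \<Longrightarrow> eval A (Comp f gs) xs z"
| eval_Prec0: "eval A f xs y \<Longrightarrow> eval A (Prec f g) (0 # xs) y"
| eval_PrecS: "eval A (Prec f g) (n # xs) r \<Longrightarrow> eval A g (n # r # xs) y
     \<Longrightarrow> eval A (Prec f g) (Suc n # xs) y"
| eval_Mn: "eval A f (y # xs) 0 \<Longrightarrow> (\<forall>z < y. \<exists>v. 0 < v \<and> eval A f (z # xs) v)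
     \<Longrightarrow> eval A (Mn f) xs y"
| eval_Orc: "eval A Orc (x # xs) (A x)"

text \<open>\<Phi>^A_e(m) = y : the e-th partial A-computable function (Turing functional
  with oracle A) on input m halts with output y. Non-codes give the empty function.\<close>
definition Phi :: "(nat \<Rightarrow> nat) \<Rightarrow> nat \<Rightarrow> nat \<Rightarrow> nat \<Rightarrow> bool" where
  "Phi A e m y \<longleftrightarrow> (\<exists>p. code p = e \<and> eval A p [m] y)"

definition chi :: "nat set \<Rightarrow> nat \<Rightarrow> nat" where
  "chi X n = (if n \<in> X then 1 else 0)"

definition turing_le :: "nat set \<Rightarrow> nat set \<Rightarrow> bool" where
  "turing_le X Y \<longleftrightarrow> (\<exists>e. \<forall>m. Phi (chi Y) e m (chi X m))"

definition join :: "(nat \<Rightarrow> nat) \<Rightarrow> (nat \<Rightarrow> nat) \<Rightarrow> nat \<Rightarrow> nat" where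
  "join g h x = (if even x then g (x div 2) else h (x div 2))"

definition app1 :: "nat set \<Rightarrow> nat \<Rightarrow> nat \<Rightarrow> nat option" where
  "app1 X n m = (if \<exists>y. Phi (chi X) n m y then Some (THE y. Phi (chi X) n m y) else None)"

definition K2_carrier :: "nat set \<Rightarrow> (nat \<Rightarrow> nat) set" where
  "K2_carrier Y = {g. \<exists>e. \<forall>n. Phi (chi Y) e n (g n)}"

definition app2 :: "(nat \<Rightarrow> nat) \<Rightarrow> (nat \<Rightarrow> nat) \<Rightarrow> (nat \<Rightarrow> nat) option" where
  "app2 g h = (if \<forall>n. \<exists>y. Phi (join g h) (g 0) n y
     then Some (\<lambda>n. THE y. Phi (join g h) (g 0) n y) else None)"

definition embedding_K1_K2 :: "nat set \<Rightarrow> nat set \<Rightarrow> (nat \<Rightarrow> (nat \<Rightarrow> nat)) \<Rightarrow> bool" where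
  "embedding_K1_K2 X Y f \<longleftrightarrow>
     (\<forall>n. f n \<in> K2_carrier Y) \<and> inj f \<and>
     (\<forall>a b c. app1 X a b = Some c \<longrightarrow> app2 (f a) (f b) = Some (f c))"

end

theory Submission
  imports Defs
begin

text \<open>
  If \<open>X \<le>\<^sub>T Y\<close>, map \<open>a\<close> to the function that holds the code of one fixed program at 0,
  \<open>a\<close> at 1 and \<open>\<chi>\<^sub>X\<close> from 2 on; it is \<open>Y\<close>-computable, and the fixed program reads \<open>a\<close> and \<open>b\<close>
  off the oracle \<open>f(a) \<oplus> f(b)\<close> and runs a universal program on them, with the copy of
  \<open>\<chi>\<^sub>X\<close> inside \<open>f(a)\<close> as oracle.

  Conversely, if \<open>f\<close> is an embedding, then \<open>f(m+1) = f(s)\<cdot>f(m)\<close> and \<open>f(\<chi>\<^sub>X(m)) = f(o)\<cdot>f(m)\<close>,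
  where \<open>s\<close> and \<open>o\<close> are the codes of the successor and of the oracle program, and \<open>\<chi>\<^sub>X(m)\<close>
  can be read off \<open>f(\<chi>\<^sub>X(m))(d)\<close> at a point \<open>d\<close> where \<open>f(0)\<close> and \<open>f(1)\<close> differ. Computing
  this from \<open>Y\<close> means evaluating programs whose oracles are themselves outputs of programs,
  nested to depth \<open>m\<close>.

  Both directions therefore rest on one universal program: it searches for a finite
  certificate of a computation in which every oracle answer is either read from the base
  oracle or certified as the output of a computation at a lower level.
\<close>

section \<open>Programs are deterministic\<close>

inductive_cases eval_ZE: "eval A Z xs y"
inductive_cases eval_SE: "eval A S xs y"
inductive_cases eval_ProjE: "eval A (Proj i) xs y"
inductive_cases eval_CompE: "eval A (Comp f gs) xs y"
inductive_cases eval_PrecE: "eval A (Prec f g) xs y"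
inductive_cases eval_MnE: "eval A (Mn f) xs y"
inductive_cases eval_OrcE: "eval A Orc xs y"

lemma eval_functional: "eval A p xs y \<Longrightarrow> eval A p xs y' \<Longrightarrow> y = y'"
proof (induct arbitrary: y' rule: eval.induct)
  case (eval_Comp ys gs xs f z)
  from eval_Comp.prems obtain ys' where ys': "length ys' = length gs"
    "\<forall>i<length gs. eval A (gs ! i) xs (ys' ! i)" "eval A f ys' y'"
    by (auto elim: eval_CompE)
  have "ys' = ys"
  proof (rule nth_equalityI)
    show "length ys' = length ys" using ys' eval_Comp.hyps(1) by simp
    show "ys' ! i = ys ! i" if "i < length ys'" for i
      using that ys' eval_Comp.hyps(1,2) by metis
  qed
  then show ?case using ys' eval_Comp.hyps(4) by auto
next
  case (eval_Prec0 f xs y g)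
  from eval_Prec0.prems have "eval A f xs y'" by (auto elim: eval_PrecE)
  then show ?case using eval_Prec0.hyps by auto
next
  case (eval_PrecS f g n xs r y)
  from eval_PrecS.prems obtain r' where
    "eval A (Prec f g) (n # xs) r'" "eval A g (n # r' # xs) y'"
    by (auto elim: eval_PrecE)
  then show ?case using eval_PrecS.hyps(2,4) by auto
next
  case (eval_Mn f y xs)
  from eval_Mn.prems have zero: "eval A f (y' # xs) 0"
    and pos: "\<forall>z<y'. \<exists>v. 0 < v \<and> eval A f (z # xs) v"
    by (auto elim: eval_MnE)
  show ?case
  proof (rule linorder_cases)
    assume "y < y'"
    with pos obtain v where "0 < v" "eval A f (y # xs) v" by blast
    with eval_Mn.hyps(2) show ?thesis by auto
  next
    assume "y' < y"
    with eval_Mn.hyps(3) obtain v where "0 < v" "\<forall>w. eval A f (y' # xs) w \<longrightarrow> v = w"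
      by blast
    with zero show ?thesis by auto
  qed
next
  case (eval_Z xs)
  then show ?case by (auto elim: eval_ZE)
next
  case (eval_S x xs)
  then show ?case by (auto elim: eval_SE)
next
  case (eval_Proj i xs)
  then show ?case by (auto elim: eval_ProjE)
next
  case (eval_Orc x xs)
  then show ?case by (auto elim: eval_OrcE)
qed

lemma code_inject [simp]: "code p = code q \<longleftrightarrow> p = q"
proof (induct p arbitrary: q)
  case (Comp f gs)
  show ?case
  proof (cases q)
    case (Comp f' gs')
    have "map code gs = map code gs' \<longleftrightarrow> gs = gs'"
      using Comp.hyps(2) list.inj_map_strong by metis
    with Comp.hyps(1) show ?thesis by (auto simp: Comp list_encode_eq)
  qed simp_all
qed (case_tac q; simp)+

lemma Phi_functional: "Phi A e m y \<Longrightarrow> Phi A e m y' \<Longrightarrow> y = y'"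
  unfolding Phi_def using eval_functional by auto

lemma Phi_I: "eval A p [m] y \<Longrightarrow> Phi A (code p) m y"
  unfolding Phi_def by blast

lemma Phi_codeD: "Phi A e m y \<Longrightarrow> code p = e \<Longrightarrow> eval A p [m] y"
  unfolding Phi_def by auto

lemma Phi_total_program:
  assumes "\<And>m. Phi A e m (F m)"
  obtains p where "\<And>m. eval A p [m] (F m)"
proof -
  from assms[of 0] obtain p where "code p = e" unfolding Phi_def by blast
  with assms Phi_codeD that show ?thesis by blast
qed

lemma app1_eq_Some_iff: "app1 X a b = Some c \<longleftrightarrow> Phi (chi X) a b c"
  unfolding app1_def using Phi_functional by (metis (mono_tags, lifting) option.distinct(1) option.inject theI the_equality)

lemma app2_eq_SomeI: "(\<And>n. Phi (join g h) (g 0) n (k n)) \<Longrightarrow> app2 g h = Some k"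
  unfolding app2_def using Phi_functional by (auto intro!: ext the_equality)

lemma app2_eq_SomeD: "app2 g h = Some k \<Longrightarrow> Phi (join g h) (g 0) n (k n)"
  unfolding app2_def using Phi_functional
  by (metis (mono_tags, lifting) option.distinct(1) option.inject theI)

section \<open>Expressions compiled into programs\<close>

datatype expr = Var nat | Num nat | Add expr expr | Sub expr expr | Mul expr expr | Orac expr
  | Rec expr expr expr | Call expr "expr list"

primrec expr_val :: "(nat \<Rightarrow> nat) \<Rightarrow> nat list \<Rightarrow> expr \<Rightarrow> nat" where
  "expr_val A env (Var i) = (if i < length env then env ! i else 0)"
| "expr_val A env (Num n) = n"
| "expr_val A env (Add a b) = expr_val A env a + expr_val A env b"
| "expr_val A env (Sub a b) = expr_val A env a - expr_val A env b"
| "expr_val A env (Mul a b) = expr_val A env a * expr_val A env b"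
| "expr_val A env (Orac a) = A (expr_val A env a)"
| "expr_val A env (Rec n b s) =
     rec_nat (expr_val A env b) (\<lambda>i r. expr_val A (i # r # env) s) (expr_val A env n)"
| "expr_val A env (Call f as) = expr_val A (map (expr_val A env) as) f"

primrec const_prog :: "nat \<Rightarrow> recf" where
  "const_prog 0 = Z"
| "const_prog (Suc n) = Comp S [const_prog n]"

definition "add_prog = Prec (Proj 0) (Comp S [Proj 1])"
definition "pred_prog = Prec Z (Proj 0)"
definition "sub_prog = Prec (Proj 0) (Comp pred_prog [Proj 1])"
definition "mul_prog = Prec Z (Comp add_prog [Proj 1, Proj 2])"

text \<open>\<open>compile k e\<close> is a program of arity \<open>k\<close>; \<open>Rec\<close> passes the environment on to its step.\<close>

primrec compile :: "nat \<Rightarrow> expr \<Rightarrow> recf" where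
  "compile k (Var i) = (if i < k then Proj i else Z)"
| "compile k (Num n) = const_prog n"
| "compile k (Add a b) = Comp add_prog [compile k a, compile k b]"
| "compile k (Sub a b) = Comp sub_prog [compile k b, compile k a]"
| "compile k (Mul a b) = Comp mul_prog [compile k a, compile k b]"
| "compile k (Orac a) = Comp Orc [compile k a]"
| "compile k (Rec n b s) =
     Comp (Prec (compile k b) (compile (Suc (Suc k)) s)) (compile k n # map Proj [0..<k])"
| "compile k (Call f as) = Comp (compile (length as) f) (map (compile k) as)"

lemma eval_ProjI: "i < length xs \<Longrightarrow> y = xs ! i \<Longrightarrow> eval A (Proj i) xs y"
  by (auto intro: eval.intros)

lemma eval_OrcI: "y = A x \<Longrightarrow> eval A Orc (x # xs) y"
  by (auto intro: eval.intros)

lemmas eval_intros = eval.intros eval_ProjI eval_OrcI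

lemma eval_Comp1: "eval A g xs y \<Longrightarrow> eval A f [y] z \<Longrightarrow> eval A (Comp f [g]) xs z"
  by (rule eval_Comp[of "[y]"]) auto

lemma eval_Comp2: "eval A g1 xs y1 \<Longrightarrow> eval A g2 xs y2 \<Longrightarrow> eval A f [y1, y2] z
   \<Longrightarrow> eval A (Comp f [g1, g2]) xs z"
  by (rule eval_Comp[of "[y1, y2]"]) (auto simp: less_Suc_eq nth_Cons')

lemma eval_Comp3: "eval A g1 xs y1 \<Longrightarrow> eval A g2 xs y2 \<Longrightarrow> eval A g3 xs y3
   \<Longrightarrow> eval A f [y1, y2, y3] z \<Longrightarrow> eval A (Comp f [g1, g2, g3]) xs z"
  by (rule eval_Comp[of "[y1, y2, y3]"]) (auto simp: less_Suc_eq nth_Cons')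

lemma eval_const_prog: "eval A (const_prog n) xs n"
  by (induct n) (auto intro: eval_intros eval_Comp1)

lemma eval_add_prog: "eval A add_prog [n, x] (n + x)"
  unfolding add_prog_def by (induct n) (auto intro!: eval_intros eval_Comp1)

lemma eval_pred_prog: "eval A pred_prog [n] (n - 1)"
  unfolding pred_prog_def
proof (induct n)
  case (Suc n)
  then show ?case by (auto intro!: eval_PrecS[OF Suc] eval_intros)
qed (auto intro!: eval_intros)

lemma eval_sub_prog: "eval A sub_prog [b, a] (a - b)"
  unfolding sub_prog_def
proof (induct b)
  case (Suc n)
  have "eval A (Comp pred_prog [Proj 1]) [n, a - n, a] (a - n - 1)"
    by (rule eval_Comp1[OF _ eval_pred_prog]) (auto intro: eval_intros)
  from eval_PrecS[OF Suc this] show ?case by simp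
qed (auto intro!: eval_intros)

lemma eval_mul_prog: "eval A mul_prog [n, x] (n * x)"
  unfolding mul_prog_def
proof (induct n)
  case (Suc n)
  have "eval A (Comp add_prog [Proj 1, Proj 2]) [n, n * x, x] (n * x + x)"
    by (rule eval_Comp2[OF _ _ eval_add_prog]) (auto intro: eval_intros)
  from eval_PrecS[OF Suc this] show ?case by (simp add: add.commute)
qed (auto intro!: eval_intros)

lemma compile_correct: "length env = k \<Longrightarrow> eval A (compile k e) env (expr_val A env e)"
proof (induct e arbitrary: k env)
  case (Var i)
  then show ?case by (auto intro: eval_intros)
next
  case (Num n)
  then show ?case by (auto intro: eval_const_prog)
next
  case (Add a b)
  then show ?case by (auto intro: eval_Comp2 eval_add_prog)
next
  case (Sub a b)
  then show ?case by (auto intro: eval_Comp2 eval_sub_prog)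
next
  case (Mul a b)
  then show ?case by (auto intro: eval_Comp2 eval_mul_prog)
next
  case (Orac a)
  then show ?case by (auto intro: eval_Comp1 eval.intros)
next
  case (Rec n b s)
  let ?R = "rec_nat (expr_val A env b) (\<lambda>i r. expr_val A (i # r # env) s)"
  have prec: "eval A (Prec (compile k b) (compile (Suc (Suc k)) s)) (m # env) (?R m)" for m
  proof (induct m)
    case 0
    then show ?case using Rec by (auto intro: eval_intros)
  next
    case (Suc m)
    have "eval A (compile (Suc (Suc k)) s) (m # ?R m # env) (expr_val A (m # ?R m # env) s)"
      using Rec(3)[of "m # ?R m # env"] Rec(4) by simp
    from eval_PrecS[OF Suc this] show ?case by simp
  qed
  show ?case
    by (simp, rule eval_Comp[where ys="expr_val A env n # env"])
      (use Rec prec in \<open>auto simp: nth_Cons' intro: eval_intros\<close>)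
next
  case (Call f as)
  show ?case
    by (simp, rule eval_Comp[where ys="map (expr_val A env) as"])
      (use Call Call(1)[of "map (expr_val A env) as"] in auto)
qed

lemma eval_compile: "length env = k \<Longrightarrow> y = expr_val A env e \<Longrightarrow> eval A (compile k e) env y"
  using compile_correct by blast

section \<open>Arithmetic, pairs and lists as expressions\<close>

text \<open>Truth values are encoded as \<open>0\<close> (false) and nonzero (true); the connectives return \<open>0\<close> or \<open>1\<close>.\<close>

definition "sgnE e = Sub (Num 1) (Sub (Num 1) e)"
definition "notE e = Sub (Num 1) e"
definition "andE a b = sgnE (Mul a b)"
definition "orE a b = sgnE (Add a b)"
definition "eqE a b = notE (Add (Sub a b) (Sub b a))"
definition "lessE a b = sgnE (Sub b a)"
definition "leE a b = notE (Sub a b)"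
definition "ifE c a b = Add (Mul (sgnE c) a) (Mul (notE c) b)"

lemma expr_val_sgnE [simp]: "expr_val A env (sgnE e) = of_bool (expr_val A env e \<noteq> 0)"
  by (simp add: sgnE_def)

lemma expr_val_notE [simp]: "expr_val A env (notE e) = of_bool (expr_val A env e = 0)"
  by (simp add: notE_def)

lemma expr_val_andE [simp]:
  "expr_val A env (andE a b) = of_bool (expr_val A env a \<noteq> 0 \<and> expr_val A env b \<noteq> 0)"
  by (simp add: andE_def)

lemma expr_val_orE [simp]:
  "expr_val A env (orE a b) = of_bool (expr_val A env a \<noteq> 0 \<or> expr_val A env b \<noteq> 0)"
  by (simp add: orE_def)

lemma expr_val_eqE [simp]: "expr_val A env (eqE a b) = of_bool (expr_val A env a = expr_val A env b)"
  by (simp add: eqE_def)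

lemma expr_val_lessE [simp]: "expr_val A env (lessE a b) = of_bool (expr_val A env a < expr_val A env b)"
  by (simp add: lessE_def)

lemma expr_val_leE [simp]: "expr_val A env (leE a b) = of_bool (expr_val A env a \<le> expr_val A env b)"
  by (simp add: leE_def)

lemma expr_val_ifE [simp]:
  "expr_val A env (ifE c a b) = (if expr_val A env c \<noteq> 0 then expr_val A env a else expr_val A env b)"
  by (simp add: ifE_def)

definition "triangleE e = Call (Rec (Var 0) (Num 0) (Add (Var 1) (Add (Var 0) (Num 1)))) [e]"

lemma rec_nat_triangle: "rec_nat 0 (\<lambda>i r. Suc (r + i)) n = triangle n"
  by (induct n) auto

lemma expr_val_triangleE [simp]: "expr_val A env (triangleE e) = triangle (expr_val A env e)"
  by (simp add: triangleE_def rec_nat_triangle)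

definition "pairE a b = Add (triangleE (Add a b)) a"

lemma expr_val_pairE [simp]:
  "expr_val A env (pairE a b) = prod_encode (expr_val A env a, expr_val A env b)"
  by (simp add: pairE_def prod_encode_def)

lemma triangle_mono: "a \<le> b \<Longrightarrow> triangle a \<le> triangle b"
  by (induct b) (auto simp: le_Suc_eq)

lemma le_triangle: "x \<le> triangle x"
  by (induct x) auto

lemma triangle_Suc_le_iff:
  assumes "m \<le> T"
  shows "triangle (Suc j) \<le> triangle T + m \<longleftrightarrow> Suc j \<le> T"
proof
  assume "Suc j \<le> T"
  then show "triangle (Suc j) \<le> triangle T + m"
    using triangle_mono[of "Suc j" T] by linarith
next
  assume le: "triangle (Suc j) \<le> triangle T + m"
  show "Suc j \<le> T"
  proof (rule ccontr)
    assume "\<not> Suc j \<le> T"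
    then have "triangle (Suc T) \<le> triangle (Suc j)" by (intro triangle_mono) simp
    with le assms show False by simp
  qed
qed

lemma prod_decode_eq_imp: "prod_decode k = (m, n) \<Longrightarrow> k = triangle (m + n) + m"
  using prod_decode_inverse[of k] by (simp add: prod_encode_def)

text \<open>The diagonal \<open>m + n\<close> of \<open>k = prod_encode (m, n)\<close> is the number of \<open>j < k\<close> with
  \<open>triangle (j + 1) \<le> k\<close>.\<close>

definition "diagonalE k =
  Call (Rec (Var 0) (Num 0) (Add (Var 1) (leE (triangleE (Add (Var 0) (Num 1))) (Var 2)))) [k]"

lemma rec_nat_count_triangle:
  assumes "m \<le> T"
  shows "rec_nat 0 (\<lambda>i r. r + of_bool (triangle (Suc i) \<le> triangle T + m)) j = min j T"
proof (induct j)
  case (Suc j)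
  have "rec_nat 0 (\<lambda>i r. r + of_bool (triangle (Suc i) \<le> triangle T + m)) (Suc j)
     = min j T + of_bool (triangle (Suc j) \<le> triangle T + m)"
    using Suc by (simp del: triangle_Suc)
  also have "\<dots> = min (Suc j) T"
    unfolding triangle_Suc_le_iff[OF assms] by simp
  finally show ?case .
qed simp

lemma expr_val_diagonalE:
  "expr_val A env (diagonalE k) = fst (prod_decode (expr_val A env k)) + snd (prod_decode (expr_val A env k))"
proof -
  obtain m n where mn: "prod_decode (expr_val A env k) = (m, n)"
    by (cases "prod_decode (expr_val A env k)")
  then have k: "expr_val A env k = triangle (m + n) + m" by (rule prod_decode_eq_imp)
  have "expr_val A env (diagonalE k) =
      rec_nat 0 (\<lambda>i r. r + of_bool (triangle (Suc i) \<le> expr_val A env k)) (expr_val A env k)"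
    by (simp add: diagonalE_def)
  also have "\<dots> = min (expr_val A env k) (m + n)"
    unfolding k using rec_nat_count_triangle[of m "m + n"] by simp
  also have "\<dots> = m + n" using k le_triangle[of "m + n"] by simp
  finally show ?thesis using mn by simp
qed

definition "fstE k = Call (Sub (Var 0) (triangleE (diagonalE (Var 0)))) [k]"
definition "sndE k = Call (Sub (diagonalE (Var 0)) (fstE (Var 0))) [k]"

lemma expr_val_fstE [simp]: "expr_val A env (fstE k) = fst (prod_decode (expr_val A env k))"
proof -
  obtain m n where mn: "prod_decode (expr_val A env k) = (m, n)"
    by (cases "prod_decode (expr_val A env k)")
  then have "expr_val A env k = triangle (m + n) + m" by (rule prod_decode_eq_imp)
  then show ?thesis using mn by (simp add: fstE_def expr_val_diagonalE)
qed

lemma expr_val_sndE [simp]: "expr_val A env (sndE k) = snd (prod_decode (expr_val A env k))"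
  by (simp add: sndE_def expr_val_diagonalE)

text \<open>Total versions of \<open>hd\<close> and \<open>tl\<close> on codes of lists; \<open>hd_code 0 = 0\<close>.\<close>

definition "hd_code v = fst (prod_decode (v - 1))"
definition "tl_code v = snd (prod_decode (v - 1))"

lemma hd_code_Suc_prod_encode [simp]: "hd_code (Suc (prod_encode (x, y))) = x"
  by (simp add: hd_code_def)

lemma hd_code_list_encode [simp]: "hd_code (list_encode (x # xs)) = x"
  by (simp add: hd_code_def)

lemma prod_decode_0: "prod_decode 0 = (0, 0)"
  using prod_encode_inverse[of "(0, 0)"] by (simp add: prod_encode_def)

lemma tl_code_list_encode [simp]: "tl_code (list_encode xs) = list_encode (tl xs)"
  by (cases xs) (auto simp: tl_code_def prod_decode_0)

lemma list_decode_eq_Nil_iff: "list_decode a = [] \<longleftrightarrow> a = 0"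
  by (metis list_decode_inverse list_encode.simps(1) list_encode_inverse)

lemma hd_code_eq_hd: "a \<noteq> 0 \<Longrightarrow> hd_code a = hd (list_decode a)"
  by (metis list_decode_eq_Nil_iff hd_code_list_encode list.collapse list_decode_inverse)

lemma tl_code_eq_tl: "tl_code a = list_encode (tl (list_decode a))"
  by (metis tl_code_list_encode list_decode_inverse)

definition "hdE L = fstE (Sub L (Num 1))"
definition "tlE L = sndE (Sub L (Num 1))"
definition "consE x L = Add (pairE x L) (Num 1)"

lemma expr_val_hdE [simp]: "expr_val A env (hdE L) = hd_code (expr_val A env L)"
  by (simp add: hdE_def hd_code_def)

lemma expr_val_tlE [simp]: "expr_val A env (tlE L) = tl_code (expr_val A env L)"
  by (simp add: tlE_def tl_code_def)

lemma expr_val_consE [simp]: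
  "expr_val A env (consE x L) = list_encode (expr_val A env x # list_decode (expr_val A env L))"
  by (simp add: consE_def)

definition "dropE j L = Call (Rec (Var 0) (Var 1) (tlE (Var 1))) [j, L]"

lemma expr_val_dropE [simp]:
  "expr_val A env (dropE j L) = list_encode (drop (expr_val A env j) (list_decode (expr_val A env L)))"
proof -
  have "rec_nat (list_encode xs) (\<lambda>i r. tl_code r) n = list_encode (drop n xs)" for xs and n :: nat
    by (induct n) (auto simp: drop_Suc tl_drop)
  from this[of "list_decode (expr_val A env L)"] show ?thesis by (simp add: dropE_def)
qed

lemma length_le_list_encode: "length xs \<le> list_encode xs"
proof (induct xs)
  case (Cons x xs)
  then show ?case using le_prod_encode_2[of "list_encode xs" x] by simp
qed simp

text \<open>The length of the list coded by \<open>L\<close> is the number of \<open>i < L\<close> with a nonempty \<open>i\<close>-th tail.\<close>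

definition "lengthE L = Call (Rec (Var 0) (Num 0) (Add (Var 1) (sgnE (dropE (Var 0) (Var 2))))) [L]"

lemma expr_val_lengthE [simp]: "expr_val A env (lengthE L) = length (list_decode (expr_val A env L))"
proof -
  let ?xs = "list_decode (expr_val A env L)"
  have "rec_nat 0 (\<lambda>i r. r + of_bool (list_encode (drop i ?xs) \<noteq> 0)) j = min j (length ?xs)"
    for j :: nat
  proof (induct j)
    case (Suc j)
    have "list_encode (drop j ?xs) \<noteq> 0 \<longleftrightarrow> j < length ?xs"
      by (metis drop_eq_Nil list_encode.simps(1) list_encode_eq not_le)
    with Suc show ?case by auto
  qed simp
  then show ?thesis using length_le_list_encode[of ?xs] by (simp add: lengthE_def)
qed

definition "nthE L j = hdE (dropE j L)"

lemma expr_val_nthE: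
  "expr_val A env j < length (list_decode (expr_val A env L)) \<Longrightarrow>
   expr_val A env (nthE L j) = list_decode (expr_val A env L) ! expr_val A env j"
  by (simp add: nthE_def hd_drop_conv_nth flip: Cons_nth_drop_Suc)

text \<open>\<open>Call\<close> replaces the environment, so bounded quantifiers pass the parameters \<open>ps\<close> on
  explicitly: the body \<open>P\<close> is evaluated in the environment \<open>z # ps\<close>.\<close>

definition vars :: "nat \<Rightarrow> nat \<Rightarrow> expr list" where
  "vars k m = map (\<lambda>i. Var (i + k)) [0..<m]"

lemma map_expr_val_vars: "length pre = k \<Longrightarrow> map (expr_val A (pre @ ps)) (vars k (length ps)) = ps"
  by (auto simp: vars_def nth_append intro!: nth_equalityI)

lemma length_vars [simp]: "length (vars k m) = m"
  by (simp add: vars_def)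

definition "all_lessE n P ps =
  Call (Rec (Var 0) (Num 1) (andE (Var 1) (Call P (Var 0 # vars 3 (length ps))))) (n # ps)"

definition "ex_lessE n P ps =
  Call (Rec (Var 0) (Num 0) (orE (Var 1) (Call P (Var 0 # vars 3 (length ps))))) (n # ps)"

lemma expr_val_all_lessE [simp]:
  "expr_val A env (all_lessE n P ps) =
   of_bool (\<forall>z < expr_val A env n. expr_val A (z # map (expr_val A env) ps) P \<noteq> 0)"
proof -
  let ?ps = "map (expr_val A env) ps"
  have "map (expr_val A ([i, r, expr_val A env n] @ ?ps)) (vars 3 (length ?ps)) = ?ps" for i r
    by (rule map_expr_val_vars) simp
  moreover have "rec_nat 1 (\<lambda>i r. of_bool (r \<noteq> 0 \<and> expr_val A (i # ?ps) P \<noteq> 0)) k =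
      (of_bool (\<forall>z < k. expr_val A (z # ?ps) P \<noteq> 0) :: nat)" for k
    by (induct k) (auto simp: less_Suc_eq)
  ultimately show ?thesis by (simp add: all_lessE_def)
qed

lemma expr_val_ex_lessE [simp]:
  "expr_val A env (ex_lessE n P ps) =
   of_bool (\<exists>z < expr_val A env n. expr_val A (z # map (expr_val A env) ps) P \<noteq> 0)"
proof -
  let ?ps = "map (expr_val A env) ps"
  have "map (expr_val A ([i, r, expr_val A env n] @ ?ps)) (vars 3 (length ?ps)) = ?ps" for i r
    by (rule map_expr_val_vars) simp
  moreover have "rec_nat 0 (\<lambda>i r. of_bool (r \<noteq> 0 \<or> expr_val A (i # ?ps) P \<noteq> 0)) k =
      (of_bool (\<exists>z < k. expr_val A (z # ?ps) P \<noteq> 0) :: nat)" for k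
    by (induct k) (auto simp: less_Suc_eq)
  ultimately show ?thesis by (simp add: ex_lessE_def)
qed

definition "ex_memberE L P ps =
  ex_lessE (lengthE L) (Call P (nthE (Var 1) (Var 0) # vars 2 (length ps))) (L # ps)"

lemma expr_val_ex_memberE [simp]:
  "expr_val A env (ex_memberE L P ps) =
   of_bool (\<exists>x \<in> set (list_decode (expr_val A env L)). expr_val A (x # map (expr_val A env) ps) P \<noteq> 0)"
proof -
  let ?ps = "map (expr_val A env) ps" and ?xs = "list_decode (expr_val A env L)"
  have "map (expr_val A ([z, expr_val A env L] @ ?ps)) (vars 2 (length ?ps)) = ?ps" for z
    by (rule map_expr_val_vars) simp
  moreover have "expr_val A (z # expr_val A env L # ?ps) (nthE (Var 1) (Var 0)) = ?xs ! z"
    if "z < length ?xs" for z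
    using that by (subst expr_val_nthE) auto
  ultimately have body: "expr_val A (z # map (expr_val A env) (L # ps))
       (Call P (nthE (Var 1) (Var 0) # vars 2 (length ps))) = expr_val A (?xs ! z # ?ps) P"
    if "z < length ?xs" for z
    using that by simp
  have "(\<exists>z < length ?xs. expr_val A (?xs ! z # ?ps) P \<noteq> 0) \<longleftrightarrow>
      (\<exists>x \<in> set ?xs. expr_val A (x # ?ps) P \<noteq> 0)"
    by (metis in_set_conv_nth)
  with body show ?thesis
    unfolding ex_memberE_def expr_val_ex_lessE expr_val_lengthE
    by (smt (verit, best))
qed

section \<open>Certificates of computations relative to a tower of oracles\<close>

abbreviation "fst_code k \<equiv> fst (prod_decode k)"
abbreviation "snd_code k \<equiv> snd (prod_decode k)"

text \<open>An entry \<open>entry l c a y h\<close> claims that the program with code \<open>c\<close>, run on the arguments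
  coded by \<open>a\<close> relative to the oracle of level \<open>l\<close>, returns \<open>y\<close>. The hint \<open>h\<close> carries the
  intermediate values: the codes of the argument values of a \<open>Comp\<close>, the previous value of a
  \<open>Prec\<close>.\<close>

definition "entry l c a y h = prod_encode (l, prod_encode (c, prod_encode (a, prod_encode (y, h))))"
definition "entry_level E = fst_code E"
definition "entry_prog E = fst_code (snd_code E)"
definition "entry_args E = fst_code (snd_code (snd_code E))"
definition "entry_result E = fst_code (snd_code (snd_code (snd_code E)))"
definition "entry_hint E = snd_code (snd_code (snd_code (snd_code E)))"

lemma entry_sel [simp]:
  "entry_level (entry l c a y h) = l" "entry_prog (entry l c a y h) = c"
  "entry_args (entry l c a y h) = a" "entry_result (entry l c a y h) = y"
  "entry_hint (entry l c a y h) = h"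
  by (simp_all add: entry_def entry_level_def entry_prog_def entry_args_def entry_result_def
      entry_hint_def)

definition records :: "nat \<Rightarrow> nat \<Rightarrow> nat \<Rightarrow> nat \<Rightarrow> nat \<Rightarrow> bool" where
  "records R l c a y \<longleftrightarrow> (\<exists>E\<in>set (list_decode R).
     entry_level E = l \<and> entry_prog E = c \<and> entry_args E = a \<and> entry_result E = y)"

definition records_pos :: "nat \<Rightarrow> nat \<Rightarrow> nat \<Rightarrow> nat \<Rightarrow> bool" where
  "records_pos R l c a \<longleftrightarrow> (\<exists>E\<in>set (list_decode R).
     entry_level E = l \<and> entry_prog E = c \<and> entry_args E = a \<and> 0 < entry_result E)"

lemma records_mono:
  "records (list_encode es) l c a y \<Longrightarrow> set es \<subseteq> set es' \<Longrightarrow> records (list_encode es') l c a y"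
  unfolding records_def by auto

lemma records_pos_mono:
  "records_pos (list_encode es) l c a \<Longrightarrow> set es \<subseteq> set es' \<Longrightarrow> records_pos (list_encode es') l c a"
  unfolding records_pos_def by auto

lemma records_append [simp]:
  "records (list_encode (es @ es')) l c a y \<longleftrightarrow>
   records (list_encode es) l c a y \<or> records (list_encode es') l c a y"
  unfolding records_def by auto

lemma records_pos_append [simp]:
  "records_pos (list_encode (es @ es')) l c a \<longleftrightarrow>
   records_pos (list_encode es) l c a \<or> records_pos (list_encode es') l c a"
  unfolding records_pos_def by auto

lemma records_entryI: "entry l c a y h \<in> set es \<Longrightarrow> records (list_encode es) l c a y"
  unfolding records_def by (metis entry_sel list_encode_inverse)

text \<open>A route \<open>q = rs l x\<close> says how the query \<open>x\<close> to the oracle of level \<open>l\<close> is answered: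
  if \<open>fst_code q = 0\<close>, by the base oracle at \<open>snd_code q\<close>; otherwise by the result of the
  program with code \<open>route_prog q\<close> on input \<open>route_arg q\<close> at level \<open>route_level q\<close>.\<close>

definition "route_level q = fst_code (snd_code q)"
definition "route_prog q = fst_code (snd_code (snd_code q))"
definition "route_arg q = snd_code (snd_code (snd_code q))"

lemma route_sel [simp]:
  "route_level (prod_encode (t, prod_encode (l, prod_encode (c, x)))) = l"
  "route_prog (prod_encode (t, prod_encode (l, prod_encode (c, x)))) = c"
  "route_arg (prod_encode (t, prod_encode (l, prod_encode (c, x)))) = x"
  by (simp_all add: route_level_def route_prog_def route_arg_def)

text \<open>The rules of \<open>eval\<close>, with their premises looked up among the entries recorded in \<open>R\<close>.\<close>

primrec justified_prog ::
  "(nat \<Rightarrow> nat) \<Rightarrow> (nat \<Rightarrow> nat \<Rightarrow> nat) \<Rightarrow> nat \<Rightarrow> recf \<Rightarrow> nat \<Rightarrow> nat \<Rightarrow> nat \<Rightarrow> nat \<Rightarrow> bool"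
where
  "justified_prog A rs l Z a y h R \<longleftrightarrow> y = 0"
| "justified_prog A rs l S a y h R \<longleftrightarrow> list_decode a \<noteq> [] \<and> y = Suc (hd (list_decode a))"
| "justified_prog A rs l (Proj i) a y h R \<longleftrightarrow>
     i < length (list_decode a) \<and> y = list_decode a ! i"
| "justified_prog A rs l (Comp f gs) a y h R \<longleftrightarrow>
     length (list_decode h) = length gs \<and>
     (\<forall>j < length gs. records R l (code (gs ! j)) a (list_decode h ! j)) \<and>
     records R l (code f) h y"
| "justified_prog A rs l (Prec f g) a y h R \<longleftrightarrow>
     (case list_decode a of
       [] \<Rightarrow> False
     | 0 # xs \<Rightarrow> records R l (code f) (list_encode xs) y
     | Suc n # xs \<Rightarrow> records R l (code (Prec f g)) (list_encode (n # xs)) h \<and>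
                    records R l (code g) (list_encode (n # h # xs)) y)"
| "justified_prog A rs l (Mn f) a y h R \<longleftrightarrow>
     records R l (code f) (list_encode (y # list_decode a)) 0 \<and>
     (\<forall>z<y. records_pos R l (code f) (list_encode (z # list_decode a)))"
| "justified_prog A rs l Orc a y h R \<longleftrightarrow>
     (case list_decode a of
       [] \<Rightarrow> False
     | x # _ \<Rightarrow>
         (if fst_code (rs l x) = 0 then y = A (snd_code (rs l x))
          else records R (route_level (rs l x)) (route_prog (rs l x))
                 (list_encode [route_arg (rs l x)]) y))"

text \<open>The same condition read off the code \<open>c\<close>, with one disjunct per rule of \<open>eval\<close>; this
  is the form checked by an expression below.\<close>

definition justified ::
  "(nat \<Rightarrow> nat) \<Rightarrow> (nat \<Rightarrow> nat \<Rightarrow> nat) \<Rightarrow> nat \<Rightarrow> nat \<Rightarrow> nat \<Rightarrow> nat \<Rightarrow> nat \<Rightarrow> nat \<Rightarrow> bool"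
where
  "justified A rs l c a y h R \<longleftrightarrow>
    (fst_code c = 0 \<and> y = 0) \<or>
    (fst_code c = 1 \<and> list_decode a \<noteq> [] \<and> y = Suc (hd (list_decode a))) \<or>
    (fst_code c = 2 \<and> snd_code c < length (list_decode a) \<and> y = list_decode a ! snd_code c) \<or>
    (fst_code c = 3 \<and> length (list_decode h) = length (list_decode (snd_code (snd_code c))) \<and>
       (\<forall>j < length (list_decode (snd_code (snd_code c))).
          records R l (list_decode (snd_code (snd_code c)) ! j) a (list_decode h ! j)) \<and>
       records R l (fst_code (snd_code c)) h y) \<or>
    (fst_code c = 4 \<and> list_decode a \<noteq> [] \<and> hd (list_decode a) = 0 \<and>
       records R l (fst_code (snd_code c)) (list_encode (tl (list_decode a))) y) \<or>
    (fst_code c = 4 \<and> list_decode a \<noteq> [] \<and> hd (list_decode a) \<noteq> 0 \<and>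
       records R l c (list_encode ((hd (list_decode a) - 1) # tl (list_decode a))) h \<and>
       records R l (snd_code (snd_code c))
         (list_encode ((hd (list_decode a) - 1) # h # tl (list_decode a))) y) \<or>
    (fst_code c = 5 \<and> records R l (snd_code c) (list_encode (y # list_decode a)) 0 \<and>
       (\<forall>z<y. records_pos R l (snd_code c) (list_encode (z # list_decode a)))) \<or>
    (fst_code c = 6 \<and> list_decode a \<noteq> [] \<and> fst_code (rs l (hd (list_decode a))) = 0 \<and>
       y = A (snd_code (rs l (hd (list_decode a))))) \<or>
    (fst_code c = 6 \<and> list_decode a \<noteq> [] \<and> fst_code (rs l (hd (list_decode a))) \<noteq> 0 \<and>
       records R (route_level (rs l (hd (list_decode a)))) (route_prog (rs l (hd (list_decode a))))
         (list_encode [route_arg (rs l (hd (list_decode a)))]) y)"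

lemma justified_code_iff: "justified A rs l (code p) a y h R \<longleftrightarrow> justified_prog A rs l p a y h R"
proof (cases p)
  case (Comp f gs)
  then show ?thesis by (auto simp: justified_def)
next
  case (Prec f g)
  then show ?thesis
    by (cases "list_decode a") (auto simp: justified_def split: nat.split)
next
  case Orc
  then show ?thesis
    by (cases "list_decode a") (auto simp: justified_def)
qed (auto simp: justified_def)


definition "justified_entry A rs E R =
  justified A rs (entry_level E) (entry_prog E) (entry_args E) (entry_result E) (entry_hint E) R"

definition valid_cert :: "(nat \<Rightarrow> nat) \<Rightarrow> (nat \<Rightarrow> nat \<Rightarrow> nat) \<Rightarrow> nat list \<Rightarrow> bool" where
  "valid_cert A rs es \<longleftrightarrow>
     (\<forall>i<length es. justified_entry A rs (es ! i) (list_encode (drop (Suc i) es)))"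

lemma valid_cert_Nil [simp]: "valid_cert A rs []"
  by (simp add: valid_cert_def)

lemma valid_cert_Cons:
  "valid_cert A rs (E # es) \<longleftrightarrow> justified_entry A rs E (list_encode es) \<and> valid_cert A rs es"
  by (auto simp: valid_cert_def less_Suc_eq_0_disj)

lemma justified_mono:
  "justified A rs l c a y h (list_encode es) \<Longrightarrow> set es \<subseteq> set es' \<Longrightarrow>
   justified A rs l c a y h (list_encode es')"
  unfolding justified_def
  by (elim disjE) (use records_mono records_pos_mono in \<open>simp_all; blast\<close>)+

lemma justified_entry_mono:
  "justified_entry A rs E (list_encode es) \<Longrightarrow> set es \<subseteq> set es' \<Longrightarrow>
   justified_entry A rs E (list_encode es')"
  unfolding justified_entry_def by (rule justified_mono)

lemma valid_cert_append: "valid_cert A rs es1 \<Longrightarrow> valid_cert A rs es2 \<Longrightarrow> valid_cert A rs (es1 @ es2)"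
proof (induct es1)
  case (Cons E es)
  then show ?case by (auto simp: valid_cert_Cons intro: justified_entry_mono)
qed simp

lemma valid_cert_concat:
  "(\<And>es. es \<in> set ess \<Longrightarrow> valid_cert A rs es) \<Longrightarrow> valid_cert A rs (concat ess)"
  by (induct ess) (auto intro: valid_cert_append)

lemma valid_cert_Cons_member: "valid_cert A rs es \<Longrightarrow> E \<in> set es \<Longrightarrow> valid_cert A rs (E # es)"
proof -
  assume valid: "valid_cert A rs es" and "E \<in> set es"
  then obtain i where i: "i < length es" "es ! i = E" by (auto simp: in_set_conv_nth)
  with valid have "justified_entry A rs E (list_encode (drop (Suc i) es))"
    by (auto simp: valid_cert_def)
  then have "justified_entry A rs E (list_encode es)"
    by (rule justified_entry_mono) (simp add: set_drop_subset)
  with valid show ?thesis by (simp add: valid_cert_Cons)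
qed

lemma valid_cert_collect:
  fixes n :: nat
  assumes "\<And>i. i < n \<Longrightarrow> \<exists>es. valid_cert A rs es \<and> Q i es"
    and "\<And>i es es'. Q i es \<Longrightarrow> set es \<subseteq> set es' \<Longrightarrow> Q i es'"
  shows "\<exists>es. valid_cert A rs es \<and> (\<forall>i<n. Q i es)"
proof -
  from assms(1) obtain F where F: "\<And>i. i < n \<Longrightarrow> valid_cert A rs (F i) \<and> Q i (F i)"
    by metis
  have "valid_cert A rs (concat (map F [0..<n]))"
    using F by (intro valid_cert_concat) auto
  moreover have "Q i (concat (map F [0..<n]))" if "i < n" for i
  proof (rule assms(2))
    show "Q i (F i)" using F[OF that] ..
    show "set (F i) \<subseteq> set (concat (map F [0..<n]))" using that by auto
  qed
  ultimately show ?thesis by blast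
qed

text \<open>\<open>level_oracle l\<close> is the oracle of level \<open>l\<close>; every one of its answers is a value of
  \<open>A\<close> or an output computed at a strictly lower level, which makes certificates well founded.\<close>

locale oracle_routing =
  fixes A :: "nat \<Rightarrow> nat" and rs :: "nat \<Rightarrow> nat \<Rightarrow> nat" and level_oracle :: "nat \<Rightarrow> nat \<Rightarrow> nat"
  assumes route_base: "fst_code (rs l x) = 0 \<Longrightarrow> level_oracle l x = A (snd_code (rs l x))"
    and route_prog: "fst_code (rs l x) \<noteq> 0 \<Longrightarrow>
      \<exists>p. code p = route_prog (rs l x) \<and>
          eval (level_oracle (route_level (rs l x))) p [route_arg (rs l x)] (level_oracle l x)"
    and route_level_less: "fst_code (rs l x) \<noteq> 0 \<Longrightarrow> route_level (rs l x) < l"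
begin

definition sound_cert :: "nat list \<Rightarrow> bool" where
  "sound_cert es \<longleftrightarrow> (\<forall>E\<in>set es. \<forall>p. code p = entry_prog E \<longrightarrow>
     eval (level_oracle (entry_level E)) p (list_decode (entry_args E)) (entry_result E))"

lemma records_sound:
  "records (list_encode es) l (code p) a y \<Longrightarrow> sound_cert es \<Longrightarrow> eval (level_oracle l) p (list_decode a) y"
  unfolding records_def sound_cert_def by auto

lemma records_pos_sound:
  "records_pos (list_encode es) l (code p) a \<Longrightarrow> sound_cert es \<Longrightarrow>
   \<exists>v. 0 < v \<and> eval (level_oracle l) p (list_decode a) v"
  unfolding records_pos_def sound_cert_def by auto

lemma justified_prog_sound:
  assumes just: "justified_prog A rs l p a y h (list_encode es)" and sound: "sound_cert es"
  shows "eval (level_oracle l) p (list_decode a) y"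
proof (cases p)
  case S
  with just show ?thesis by (cases "list_decode a") (auto intro: eval.intros)
next
  case (Comp f gs)
  with just sound show ?thesis
    by (auto intro!: eval_Comp[where ys = "list_decode h"] dest: records_sound)
next
  case (Prec f g)
  then obtain n xs where a: "list_decode a = n # xs"
    using just by (auto split: list.splits)
  show ?thesis
  proof (cases n)
    case 0
    with just Prec a have "records (list_encode es) l (code f) (list_encode xs) y" by simp
    from records_sound[OF this sound] show ?thesis using Prec a 0 by (auto intro: eval_Prec0)
  next
    case (Suc m)
    with just Prec a have
      "records (list_encode es) l (code (Prec f g)) (list_encode (m # xs)) h"
      "records (list_encode es) l (code g) (list_encode (m # h # xs)) y"
      by simp_all
    from this[THEN records_sound[OF _ sound]] show ?thesis
      using Prec a Suc by (auto intro: eval_PrecS)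
  qed
next
  case (Mn f)
  with just have "records (list_encode es) l (code f) (list_encode (y # list_decode a)) 0"
    "\<forall>z<y. records_pos (list_encode es) l (code f) (list_encode (z # list_decode a))"
    by simp_all
  with sound show ?thesis
    using records_sound records_pos_sound Mn by (fastforce intro!: eval_Mn)
next
  case Orc
  then obtain x xs where a: "list_decode a = x # xs"
    using just by (auto split: list.splits)
  let ?q = "rs l x"
  have "y = level_oracle l x"
  proof (cases "fst_code ?q = 0")
    case True
    then show ?thesis using just Orc a route_base by simp
  next
    case False
    then obtain p' where p': "code p' = route_prog ?q"
      "eval (level_oracle (route_level ?q)) p' [route_arg ?q] (level_oracle l x)"
      using route_prog by blast
    from just Orc a False have
      "records (list_encode es) (route_level ?q) (code p') (list_encode [route_arg ?q]) y"
      by (simp add: p'(1))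
    from records_sound[OF this sound] p'(2) show ?thesis
      using eval_functional by auto
  qed
  then show ?thesis using a Orc by (auto intro: eval.intros)
qed (use just in \<open>auto intro: eval_intros\<close>)

lemma valid_cert_sound: "valid_cert A rs es \<Longrightarrow> sound_cert es"
proof (induct es)
  case (Cons E es)
  then have just: "justified_entry A rs E (list_encode es)" and sound: "sound_cert es"
    by (auto simp: valid_cert_Cons)
  have "eval (level_oracle (entry_level E)) p (list_decode (entry_args E)) (entry_result E)"
    if "code p = entry_prog E" for p
    using just that justified_code_iff[of A rs _ p] justified_prog_sound[OF _ sound]
    unfolding justified_entry_def by metis
  with sound show ?case by (auto simp: sound_cert_def)
qed (simp add: sound_cert_def)


definition certified :: "nat \<Rightarrow> recf \<Rightarrow> nat list \<Rightarrow> nat \<Rightarrow> bool" where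
  "certified l p xs y \<longleftrightarrow>
     (\<exists>es. valid_cert A rs es \<and> records (list_encode es) l (code p) (list_encode xs) y)"

lemma certifiedI:
  assumes "valid_cert A rs es" and "justified_prog A rs l p (list_encode xs) y h (list_encode es)"
  shows "certified l p xs y"
proof -
  let ?E = "entry l (code p) (list_encode xs) y h"
  have "valid_cert A rs (?E # es)"
    using assms by (simp add: valid_cert_Cons justified_entry_def justified_code_iff)
  moreover have "records (list_encode (?E # es)) l (code p) (list_encode xs) y"
    by (rule records_entryI[where h = h]) simp
  ultimately show ?thesis unfolding certified_def by blast
qed

lemma certified_append:
  assumes "certified l p xs y" and "certified l' p' xs' y'"
  obtains es where "valid_cert A rs es"
    "records (list_encode es) l (code p) (list_encode xs) y"
    "records (list_encode es) l' (code p') (list_encode xs') y'"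
proof -
  from assms obtain es es' where "valid_cert A rs es" "valid_cert A rs es'"
    "records (list_encode es) l (code p) (list_encode xs) y"
    "records (list_encode es') l' (code p') (list_encode xs') y'"
    unfolding certified_def by blast
  then show ?thesis
    using that[of "es @ es'"] by (simp add: valid_cert_append)
qed

lemma certified_Comp:
  assumes len: "length ys = length gs"
    and args: "\<forall>i<length gs. certified l (gs ! i) xs (ys ! i)"
    and outer: "certified l f ys z"
  shows "certified l (Comp f gs) xs z"
proof -
  obtain es1 where es1: "valid_cert A rs es1"
    "\<forall>i<length gs. records (list_encode es1) l (code (gs ! i)) (list_encode xs) (ys ! i)"
    using valid_cert_collect[of "length gs" A rs
        "\<lambda>i es. records (list_encode es) l (code (gs ! i)) (list_encode xs) (ys ! i)"]
      args records_mono unfolding certified_def by blast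
  obtain es2 where es2: "valid_cert A rs es2" "records (list_encode es2) l (code f) (list_encode ys) z"
    using outer unfolding certified_def by blast
  have "justified_prog A rs l (Comp f gs) (list_encode xs) z (list_encode ys) (list_encode (es1 @ es2))"
    using es1(2) es2(2) len by simp
  with es1(1) es2(1) show ?thesis by (blast intro: certifiedI valid_cert_append)
qed

lemma certified_Prec0:
  assumes "certified l f xs y"
  shows "certified l (Prec f g) (0 # xs) y"
proof -
  from assms obtain es where "valid_cert A rs es" "records (list_encode es) l (code f) (list_encode xs) y"
    unfolding certified_def by blast
  then show ?thesis by (intro certifiedI[where h = 0]) simp_all
qed

lemma certified_PrecS:
  assumes "certified l (Prec f g) (n # xs) r" and "certified l g (n # r # xs) y"
  shows "certified l (Prec f g) (Suc n # xs) y"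
proof -
  from assms obtain es where "valid_cert A rs es"
    "records (list_encode es) l (code (Prec f g)) (list_encode (n # xs)) r"
    "records (list_encode es) l (code g) (list_encode (n # r # xs)) y"
    by (rule certified_append)
  then show ?thesis by (intro certifiedI[where h = r]) (simp_all del: code.simps)
qed

lemma certified_Mn:
  assumes zero: "certified l f (y # xs) 0"
    and pos: "\<forall>z<y. \<exists>v. 0 < v \<and> certified l f (z # xs) v"
  shows "certified l (Mn f) xs y"
proof -
  obtain es1 where es1: "valid_cert A rs es1"
    "\<forall>z<y. records_pos (list_encode es1) l (code f) (list_encode (z # xs))"
    using valid_cert_collect[of y A rs "\<lambda>z es. records_pos (list_encode es) l (code f) (list_encode (z # xs))"]
      pos records_pos_mono unfolding certified_def records_def records_pos_def by fastforce
  obtain es2 where es2: "valid_cert A rs es2"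
    "records (list_encode es2) l (code f) (list_encode (y # xs)) 0"
    using zero unfolding certified_def by blast
  have "justified_prog A rs l (Mn f) (list_encode xs) y 0 (list_encode (es1 @ es2))"
    using es1(2) es2(2) by simp
  with es1(1) es2(1) show ?thesis by (blast intro: certifiedI valid_cert_append)
qed

lemma certified_Orc:
  assumes lower: "\<And>l' p xs y. l' < l \<Longrightarrow> eval (level_oracle l') p xs y \<Longrightarrow> certified l' p xs y"
  shows "certified l Orc (x # xs) (level_oracle l x)"
proof (cases "fst_code (rs l x) = 0")
  case True
  then show ?thesis
    by (intro certifiedI[where es = "[]"]) (simp_all add: route_base)
next
  case False
  let ?q = "rs l x"
  obtain p where "code p = route_prog ?q"
    "eval (level_oracle (route_level ?q)) p [route_arg ?q] (level_oracle l x)"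
    using route_prog[OF False] by blast
  moreover have "certified (route_level ?q) p [route_arg ?q] (level_oracle l x)"
    using lower[OF route_level_less[OF False] calculation(2)] .
  ultimately obtain es where "valid_cert A rs es"
    "records (list_encode es) (route_level ?q) (route_prog ?q) (list_encode [route_arg ?q]) (level_oracle l x)"
    unfolding certified_def by auto
  then show ?thesis
    using False by (intro certifiedI[where h = 0]) simp_all
qed

theorem eval_certified: "eval (level_oracle l) p xs y \<Longrightarrow> certified l p xs y"
proof (induct l arbitrary: p xs y rule: less_induct)
  case (less l)
  from less.prems show ?case
  proof (induct rule: eval.induct)
    case (eval_Comp ys gs xs f z)
    then show ?case by (simp add: certified_Comp)
  next
    case (eval_Mn f y xs)
    then show ?case by (blast intro: certified_Mn)
  next
    case (eval_Orc x xs)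
    then show ?case using less.hyps by (rule certified_Orc)
  qed (auto intro: certifiedI[where es = "[]"] certified_Prec0 certified_PrecS)
qed

end

section \<open>Checking certificates by an expression\<close>

definition "entry_levelE E = fstE E"
definition "entry_progE E = fstE (sndE E)"
definition "entry_argsE E = fstE (sndE (sndE E))"
definition "entry_resultE E = fstE (sndE (sndE (sndE E)))"
definition "entry_hintE E = sndE (sndE (sndE (sndE E)))"

lemma expr_val_entry_selE [simp]:
  "expr_val A env (entry_levelE E) = entry_level (expr_val A env E)"
  "expr_val A env (entry_progE E) = entry_prog (expr_val A env E)"
  "expr_val A env (entry_argsE E) = entry_args (expr_val A env E)"
  "expr_val A env (entry_resultE E) = entry_result (expr_val A env E)"
  "expr_val A env (entry_hintE E) = entry_hint (expr_val A env E)"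
  by (simp_all add: entry_levelE_def entry_progE_def entry_argsE_def entry_resultE_def
      entry_hintE_def entry_level_def entry_prog_def entry_args_def entry_result_def entry_hint_def)

definition "route_levelE q = fstE (sndE q)"
definition "route_progE q = fstE (sndE (sndE q))"
definition "route_argE q = sndE (sndE (sndE q))"

lemma expr_val_route_selE [simp]:
  "expr_val A env (route_levelE q) = route_level (expr_val A env q)"
  "expr_val A env (route_progE q) = route_prog (expr_val A env q)"
  "expr_val A env (route_argE q) = route_arg (expr_val A env q)"
  by (simp_all add: route_levelE_def route_progE_def route_argE_def route_level_def
      route_prog_def route_arg_def)

definition "record_matchE =
  andE (eqE (entry_levelE (Var 0)) (Var 1)) (andE (eqE (entry_progE (Var 0)) (Var 2))
    (andE (eqE (entry_argsE (Var 0)) (Var 3)) (eqE (entry_resultE (Var 0)) (Var 4))))"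

definition "record_pos_matchE =
  andE (eqE (entry_levelE (Var 0)) (Var 1)) (andE (eqE (entry_progE (Var 0)) (Var 2))
    (andE (eqE (entry_argsE (Var 0)) (Var 3)) (sgnE (entry_resultE (Var 0)))))"

definition "recordsE R l c a y = ex_memberE R record_matchE [l, c, a, y]"
definition "records_posE R l c a = ex_memberE R record_pos_matchE [l, c, a]"

lemma expr_val_recordsE [simp]:
  "expr_val A env (recordsE R l c a y) = of_bool (records (expr_val A env R) (expr_val A env l)
     (expr_val A env c) (expr_val A env a) (expr_val A env y))"
  by (simp add: recordsE_def record_matchE_def records_def conj_ac)

lemma expr_val_records_posE [simp]:
  "expr_val A env (records_posE R l c a) = of_bool (records_pos (expr_val A env R)
     (expr_val A env l) (expr_val A env c) (expr_val A env a))"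
  by (simp add: records_posE_def record_pos_matchE_def records_pos_def conj_ac)

text \<open>The disjuncts of \<open>justified\<close>, evaluated in the environment \<open>[l, c, a, y, h, R]\<close>.\<close>

abbreviation "code_tagE \<equiv> fstE (Var 1)"
abbreviation "code_bodyE \<equiv> sndE (Var 1)"

definition "justified_ZE = andE (eqE code_tagE (Num 0)) (eqE (Var 3) (Num 0))"

definition "justified_SE =
  andE (eqE code_tagE (Num 1)) (andE (sgnE (Var 2)) (eqE (Var 3) (Add (hdE (Var 2)) (Num 1))))"

definition "justified_ProjE =
  andE (eqE code_tagE (Num 2))
    (andE (lessE code_bodyE (lengthE (Var 2))) (eqE (Var 3) (nthE (Var 2) code_bodyE)))"

definition "comp_arg_recordedE = recordsE (Var 4) (Var 1) (nthE (Var 5) (Var 0)) (Var 2) (nthE (Var 3) (Var 0))"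

definition "justified_CompE =
  andE (eqE code_tagE (Num 3)) (andE (eqE (lengthE (Var 4)) (lengthE (sndE code_bodyE)))
    (andE (all_lessE (lengthE (sndE code_bodyE)) comp_arg_recordedE
             [Var 0, Var 2, Var 4, Var 5, sndE code_bodyE])
      (recordsE (Var 5) (Var 0) (fstE code_bodyE) (Var 4) (Var 3))))"

definition "justified_Prec0E =
  andE (eqE code_tagE (Num 4)) (andE (sgnE (Var 2)) (andE (eqE (hdE (Var 2)) (Num 0))
    (recordsE (Var 5) (Var 0) (fstE code_bodyE) (tlE (Var 2)) (Var 3))))"

definition "justified_PrecSE =
  andE (eqE code_tagE (Num 4)) (andE (sgnE (Var 2)) (andE (sgnE (hdE (Var 2)))
    (andE (recordsE (Var 5) (Var 0) (Var 1) (consE (Sub (hdE (Var 2)) (Num 1)) (tlE (Var 2))) (Var 4))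
      (recordsE (Var 5) (Var 0) (sndE code_bodyE)
         (consE (Sub (hdE (Var 2)) (Num 1)) (consE (Var 4) (tlE (Var 2)))) (Var 3)))))"

definition "mn_below_recordedE = records_posE (Var 4) (Var 1) (Var 2) (consE (Var 0) (Var 3))"

definition "justified_MnE =
  andE (eqE code_tagE (Num 5))
    (andE (recordsE (Var 5) (Var 0) code_bodyE (consE (Var 3) (Var 2)) (Num 0))
      (all_lessE (Var 3) mn_below_recordedE [Var 0, code_bodyE, Var 2, Var 5]))"

definition "routeE RS = Call RS [Var 0, hdE (Var 2)]"

definition "justified_Orc_baseE RS =
  andE (eqE code_tagE (Num 6)) (andE (sgnE (Var 2)) (andE (eqE (fstE (routeE RS)) (Num 0))
    (eqE (Var 3) (Orac (sndE (routeE RS))))))"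

definition "justified_Orc_routedE RS =
  andE (eqE code_tagE (Num 6)) (andE (sgnE (Var 2)) (andE (sgnE (fstE (routeE RS)))
    (recordsE (Var 5) (route_levelE (routeE RS)) (route_progE (routeE RS))
       (consE (route_argE (routeE RS)) (Num 0)) (Var 3))))"

lemma expr_val_justified_ZE:
  "expr_val A [l, c, a, y, h, R] justified_ZE = of_bool (fst_code c = 0 \<and> y = 0)"
  by (simp add: justified_ZE_def)

lemma expr_val_justified_SE:
  "expr_val A [l, c, a, y, h, R] justified_SE =
   of_bool (fst_code c = 1 \<and> list_decode a \<noteq> [] \<and> y = Suc (hd (list_decode a)))"
  by (simp add: justified_SE_def list_decode_eq_Nil_iff hd_code_eq_hd cong: conj_cong)

lemma expr_val_justified_ProjE:
  "expr_val A [l, c, a, y, h, R] justified_ProjE =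
   of_bool (fst_code c = 2 \<and> snd_code c < length (list_decode a) \<and> y = list_decode a ! snd_code c)"
  by (simp add: justified_ProjE_def expr_val_nthE cong: conj_cong)

lemma expr_val_justified_CompE:
  "expr_val A [l, c, a, y, h, R] justified_CompE =
   of_bool (fst_code c = 3 \<and> length (list_decode h) = length (list_decode (snd_code (snd_code c))) \<and>
     (\<forall>j < length (list_decode (snd_code (snd_code c))).
        records R l (list_decode (snd_code (snd_code c)) ! j) a (list_decode h ! j)) \<and>
     records R l (fst_code (snd_code c)) h y)"
proof -
  let ?gs = "list_decode (snd_code (snd_code c))"
  have "expr_val A [j, l, a, h, R, snd_code (snd_code c)] comp_arg_recordedE =
      of_bool (records R l (?gs ! j) a (list_decode h ! j))"
    if "j < length ?gs" "length (list_decode h) = length ?gs" for j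
    using that by (simp add: comp_arg_recordedE_def expr_val_nthE)
  then show ?thesis
    by (auto simp: justified_CompE_def)
qed

lemma expr_val_justified_Prec0E:
  "expr_val A [l, c, a, y, h, R] justified_Prec0E =
   of_bool (fst_code c = 4 \<and> list_decode a \<noteq> [] \<and> hd (list_decode a) = 0 \<and>
     records R l (fst_code (snd_code c)) (list_encode (tl (list_decode a))) y)"
  by (simp add: justified_Prec0E_def list_decode_eq_Nil_iff hd_code_eq_hd tl_code_eq_tl cong: conj_cong)

lemma expr_val_justified_PrecSE:
  "expr_val A [l, c, a, y, h, R] justified_PrecSE =
   of_bool (fst_code c = 4 \<and> list_decode a \<noteq> [] \<and> hd (list_decode a) \<noteq> 0 \<and>
     records R l c (list_encode ((hd (list_decode a) - 1) # tl (list_decode a))) h \<and>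
     records R l (snd_code (snd_code c)) (list_encode ((hd (list_decode a) - 1) # h # tl (list_decode a))) y)"
  by (simp add: justified_PrecSE_def list_decode_eq_Nil_iff hd_code_eq_hd tl_code_eq_tl
      del: list_encode.simps cong: conj_cong)

lemma expr_val_justified_MnE:
  "expr_val A [l, c, a, y, h, R] justified_MnE =
   of_bool (fst_code c = 5 \<and> records R l (snd_code c) (list_encode (y # list_decode a)) 0 \<and>
     (\<forall>z<y. records_pos R l (snd_code c) (list_encode (z # list_decode a))))"
  by (simp add: justified_MnE_def mn_below_recordedE_def del: list_encode.simps)

lemma expr_val_justified_Orc_baseE:
  "expr_val A [l, c, a, y, h, R] (justified_Orc_baseE RS) =
   of_bool (fst_code c = 6 \<and> list_decode a \<noteq> [] \<and> fst_code (expr_val A [l, hd (list_decode a)] RS) = 0 \<and>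
     y = A (snd_code (expr_val A [l, hd (list_decode a)] RS)))"
  by (simp add: justified_Orc_baseE_def routeE_def list_decode_eq_Nil_iff hd_code_eq_hd cong: conj_cong)

lemma expr_val_justified_Orc_routedE:
  "expr_val A [l, c, a, y, h, R] (justified_Orc_routedE RS) =
   of_bool (fst_code c = 6 \<and> list_decode a \<noteq> [] \<and> fst_code (expr_val A [l, hd (list_decode a)] RS) \<noteq> 0 \<and>
     records R (route_level (expr_val A [l, hd (list_decode a)] RS))
       (route_prog (expr_val A [l, hd (list_decode a)] RS))
       (list_encode [route_arg (expr_val A [l, hd (list_decode a)] RS)]) y)"
  by (simp add: justified_Orc_routedE_def routeE_def list_decode_eq_Nil_iff hd_code_eq_hd
      del: list_encode.simps cong: conj_cong)

definition "justifiedE RS =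
  orE justified_ZE (orE justified_SE (orE justified_ProjE (orE justified_CompE
    (orE justified_Prec0E (orE justified_PrecSE (orE justified_MnE
      (orE (justified_Orc_baseE RS) (justified_Orc_routedE RS))))))))"

lemma expr_val_justifiedE:
  "expr_val A [l, c, a, y, h, R] (justifiedE RS) =
   of_bool (justified A (\<lambda>l x. expr_val A [l, x] RS) l c a y h R)"
  unfolding justifiedE_def expr_val_orE expr_val_justified_ZE expr_val_justified_SE
    expr_val_justified_ProjE expr_val_justified_CompE expr_val_justified_Prec0E
    expr_val_justified_PrecSE expr_val_justified_MnE expr_val_justified_Orc_baseE
    expr_val_justified_Orc_routedE
  by (simp only: of_bool_eq_0_iff justified_def not_not)

definition "justified_atE RS =
  Call (justifiedE RS) [entry_levelE (nthE (Var 1) (Var 0)), entry_progE (nthE (Var 1) (Var 0)),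
    entry_argsE (nthE (Var 1) (Var 0)), entry_resultE (nthE (Var 1) (Var 0)),
    entry_hintE (nthE (Var 1) (Var 0)), dropE (Add (Var 0) (Num 1)) (Var 1)]"

lemma expr_val_justified_atE:
  assumes "i < length (list_decode W)"
  shows "expr_val A [i, W] (justified_atE RS) = of_bool (justified_entry A (\<lambda>l x. expr_val A [l, x] RS)
     (list_decode W ! i) (list_encode (drop (Suc i) (list_decode W))))"
proof -
  have "expr_val A [i, W] (nthE (Var 1) (Var 0)) = list_decode W ! i"
    using assms by (subst expr_val_nthE) auto
  moreover have "expr_val A [i, W] (dropE (Add (Var 0) (Num 1)) (Var 1)) =
      list_encode (drop (Suc i) (list_decode W))"
    by simp
  ultimately show ?thesis
    unfolding justified_atE_def justified_entry_def
    by (simp only: expr_val.simps(8) list.map expr_val_entry_selE expr_val_justifiedE)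
qed

definition "valid_certE RS W = all_lessE (lengthE W) (justified_atE RS) [W]"

lemma expr_val_valid_certE:
  "expr_val A env (valid_certE RS W) =
   of_bool (valid_cert A (\<lambda>l x. expr_val A [l, x] RS) (list_decode (expr_val A env W)))"
  unfolding valid_certE_def valid_cert_def
  by (simp add: expr_val_justified_atE del: expr_val.simps)

section \<open>A universal program for towers of oracles\<close>

text \<open>On input \<open>[l, e, x]\<close> the program searches for the least \<open>W\<close> coding a valid certificate
  whose first entry concerns the program \<open>e\<close> on \<open>[x]\<close> at level \<open>l\<close>, and returns the result
  claimed by that entry.\<close>

definition "no_certE RS =
  notE (andE (valid_certE RS (Var 0)) (andE (sgnE (Var 0))
    (andE (eqE (entry_levelE (hdE (Var 0))) (Var 1)) (andE (eqE (entry_progE (hdE (Var 0))) (Var 2))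
      (eqE (entry_argsE (hdE (Var 0))) (consE (Var 3) (Num 0)))))))"

definition "universal_prog RS =
  Comp (compile 4 (entry_resultE (hdE (Var 0)))) [Mn (compile 4 (no_certE RS)), Proj 0, Proj 1, Proj 2]"

lemma expr_val_no_certE:
  "expr_val A [W, l, e, x] (no_certE RS) =
   of_bool (\<not> (valid_cert A (\<lambda>l x. expr_val A [l, x] RS) (list_decode W) \<and> W \<noteq> 0 \<and>
     entry_level (hd_code W) = l \<and> entry_prog (hd_code W) = e \<and> entry_args (hd_code W) = list_encode [x]))"
  by (simp add: no_certE_def expr_val_valid_certE)

context oracle_routing
begin

lemma certified_ex_head:
  assumes "certified l p xs y"
  obtains es h where "valid_cert A rs (entry l (code p) (list_encode xs) y h # es)"
proof -
  from assms obtain es E where "valid_cert A rs es" "E \<in> set es" "entry_level E = l"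
    "entry_prog E = code p" "entry_args E = list_encode xs" "entry_result E = y"
    unfolding certified_def records_def by auto
  then show ?thesis
    using that[of "entry_hint E" es] valid_cert_Cons_member
    by (metis entry_def entry_level_def entry_prog_def entry_args_def entry_result_def
        entry_hint_def prod.collapse prod_decode_inverse)
qed

lemma valid_cert_head_sound:
  assumes "valid_cert A rs (list_decode W)" and "W \<noteq> 0" and "entry_prog (hd_code W) = code p"
  shows "eval (level_oracle (entry_level (hd_code W))) p
    (list_decode (entry_args (hd_code W))) (entry_result (hd_code W))"
proof -
  have "hd_code W \<in> set (list_decode W)"
    using assms(2) by (simp add: hd_code_eq_hd list_decode_eq_Nil_iff)
  with valid_cert_sound[OF assms(1)] assms(3) show ?thesis
    unfolding sound_cert_def by metis
qed

end

theorem eval_universal_prog: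
  assumes routing: "oracle_routing A (\<lambda>l x. expr_val A [l, x] RS) level_oracle"
    and comp: "eval (level_oracle l) p [x] y"
  shows "eval A (universal_prog RS) [l, code p, x] y"
proof -
  interpret oracle_routing A "\<lambda>l x. expr_val A [l, x] RS" level_oracle
    by (rule routing)
  let ?test = "\<lambda>w. expr_val A [w, l, code p, x] (no_certE RS)"
  obtain es h where "valid_cert A (\<lambda>l x. expr_val A [l, x] RS) (entry l (code p) (list_encode [x]) y h # es)"
    using eval_certified[OF comp] by (rule certified_ex_head)
  then have "?test (list_encode (entry l (code p) (list_encode [x]) y h # es)) = 0"
    by (simp add: expr_val_no_certE del: list_encode.simps) simp
  then have ex: "\<exists>w. ?test w = 0" by blast
  define W where "W = (LEAST w. ?test w = 0)"
  have least: "?test W = 0" "\<And>z. z < W \<Longrightarrow> 0 < ?test z"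
    unfolding W_def using LeastI_ex[OF ex] not_less_Least by auto
  then have W: "valid_cert A (\<lambda>l x. expr_val A [l, x] RS) (list_decode W)" "W \<noteq> 0"
    "entry_level (hd_code W) = l" "entry_prog (hd_code W) = code p" "entry_args (hd_code W) = list_encode [x]"
    by (auto simp: expr_val_no_certE)
  have "entry_result (hd_code W) = y"
    using valid_cert_head_sound[OF W(1,2,4)] W(3,5) comp eval_functional by auto
  moreover have "eval A (Mn (compile 4 (no_certE RS))) [l, code p, x] W"
  proof (rule eval_Mn)
    show "eval A (compile 4 (no_certE RS)) [W, l, code p, x] 0"
      using least(1) by (intro eval_compile) simp_all
    show "\<forall>z<W. \<exists>v. 0 < v \<and> eval A (compile 4 (no_certE RS)) [z, l, code p, x] v"
      using least(2) compile_correct[of "[_, l, code p, x]" 4 A] by auto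
  qed
  ultimately show ?thesis
    unfolding universal_prog_def
    by (intro eval_Comp[where ys = "[W, l, code p, x]"])
      (auto simp: less_Suc_eq nth_Cons' intro: eval_intros eval_compile)
qed

section \<open>From Turing reducibility to an embedding\<close>

text \<open>Under the oracle \<open>f(a) \<oplus> f(b)\<close>, the query \<open>x\<close> is routed to position \<open>2x + 4\<close>, which holds
  \<open>f(a)(x + 2) = \<chi>\<^sub>X(x)\<close>.\<close>

definition "route_to_chi = pairE (Num 0) (Add (Mul (Num 2) (Var 1)) (Num 4))"

text \<open>The output at \<open>n \<noteq> 1\<close> is copied from position \<open>2n\<close> of the oracle, i.e. from \<open>f(a)(n)\<close>.\<close>

definition "emb_outE = ifE (eqE (Var 0) (Num 1)) (Var 1) (Orac (Mul (Num 2) (Var 0)))"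

definition "emb_prog =
  Comp (compile 2 emb_outE)
    [Proj 0, Comp (universal_prog route_to_chi) [Z, Comp Orc [const_prog 2], Comp Orc [const_prog 3]]]"

definition emb :: "nat set \<Rightarrow> nat \<Rightarrow> nat \<Rightarrow> nat" where
  "emb X a n = (if n = 0 then code emb_prog else if n = 1 then a else chi X (n - 2))"

lemma emb_in_K2_carrier:
  assumes "turing_le X Y"
  shows "emb X a \<in> K2_carrier Y"
proof -
  from assms obtain e where "\<And>m. Phi (chi Y) e m (chi X m)"
    unfolding turing_le_def by blast
  then obtain q where q: "\<And>m. eval (chi Y) q [m] (chi X m)"
    by (rule Phi_total_program) auto
  let ?outE = "ifE (eqE (Var 0) (Num 0)) (Num (code emb_prog)) (ifE (eqE (Var 0) (Num 1)) (Num a) (Var 1))"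
  have "eval (chi Y) (Comp (compile 2 ?outE) [Proj 0, Comp q [compile 1 (Sub (Var 0) (Num 2))]]) [n] (emb X a n)"
    for n
  proof (rule eval_Comp2)
    show "eval (chi Y) (Proj 0) [n] n" by (auto intro: eval_intros)
    show "eval (chi Y) (Comp q [compile 1 (Sub (Var 0) (Num 2))]) [n] (chi X (n - 2))"
      by (rule eval_Comp1[OF _ q]) (rule eval_compile; simp)
    show "eval (chi Y) (compile 2 ?outE) [n, chi X (n - 2)] (emb X a n)"
      by (rule eval_compile) (auto simp: emb_def)
  qed
  then show ?thesis unfolding K2_carrier_def by (blast intro: Phi_I)
qed

lemma inj_emb: "inj (emb X)"
proof (rule injI)
  fix a b
  assume "emb X a = emb X b"
  then have "emb X a 1 = emb X b 1" by simp
  then show "a = b" by (simp add: emb_def)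
qed

lemma app2_emb:
  assumes "app1 X a b = Some c"
  shows "app2 (emb X a) (emb X b) = Some (emb X c)"
proof (rule app2_eq_SomeI)
  fix n
  from assms obtain p where p: "code p = a" "eval (chi X) p [b] c"
    unfolding app1_eq_Some_iff Phi_def by blast
  let ?O = "join (emb X a) (emb X b)"
  have "oracle_routing ?O (\<lambda>l x. expr_val ?O [l, x] route_to_chi) (\<lambda>l. chi X)"
    by unfold_locales (auto simp: route_to_chi_def join_def emb_def)
  from eval_universal_prog[OF this, where l = 0 and p = p and x = b and y = c] p
  have "eval ?O (universal_prog route_to_chi) [0, a, b] c" by simp
  then have sim: "eval ?O (Comp (universal_prog route_to_chi) [Z, Comp Orc [const_prog 2], Comp Orc [const_prog 3]]) [n] c"
    by (rule eval_Comp3[rotated 3])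
      (auto intro!: eval_Z eval_Comp1[OF eval_const_prog] eval_OrcI simp: join_def emb_def)
  have "eval ?O emb_prog [n] (emb X c n)"
    unfolding emb_prog_def
    by (intro eval_Comp2[OF _ sim])
      (auto intro!: eval_compile eval_ProjI simp: emb_outE_def join_def emb_def)
  then show "Phi ?O (emb X a 0) n (emb X c n)"
    by (simp add: emb_def Phi_I)
qed

theorem embedding_of_turing_le: "turing_le X Y \<Longrightarrow> embedding_K1_K2 X Y (emb X)"
  unfolding embedding_K1_K2_def by (simp add: emb_in_K2_carrier inj_emb app2_emb)

section \<open>From an embedding to Turing reducibility\<close>

definition "mod2E x = Call (Rec (Var 0) (Num 0) (Sub (Num 1) (Var 1))) [x]"
definition "div2E x = Call (Rec (Var 0) (Num 0) (Add (Var 1) (mod2E (Var 0)))) [x]"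

lemma expr_val_mod2E [simp]: "expr_val A env (mod2E x) = expr_val A env x mod 2"
proof -
  have "rec_nat 0 (\<lambda>i r. 1 - r) n = n mod 2" for n :: nat
    by (induct n) (auto simp: mod_Suc)
  then show ?thesis by (simp add: mod2E_def)
qed

lemma expr_val_div2E [simp]: "expr_val A env (div2E x) = expr_val A env x div 2"
proof -
  have "rec_nat 0 (\<lambda>i r. r + i mod 2) n = n div 2" for n :: nat
    by (induct n) (auto, presburger)
  then show ?thesis by (simp add: div2E_def)
qed

definition tower :: "(nat \<Rightarrow> nat) \<Rightarrow> (nat \<Rightarrow> nat) \<Rightarrow> (nat \<Rightarrow> nat \<Rightarrow> nat) \<Rightarrow> nat set \<Rightarrow> nat \<Rightarrow> nat \<Rightarrow> nat"
where
  "tower g h F Y L = (if L < 2 then chi Y else join (if even L then g else h) (F (L div 2 - 1)))"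

text \<open>Even queries \<open>2n\<close> above level \<open>1\<close> ask for \<open>g n\<close> or \<open>h n\<close>, computed at level \<open>0\<close>; odd
  queries \<open>2n + 1\<close> ask for \<open>F m n\<close>, computed at level \<open>0\<close> if \<open>m = 0\<close> and otherwise by \<open>q\<close> at
  level \<open>2m\<close>, which carries \<open>g \<oplus> F (m - 1)\<close>.\<close>

definition "route_tower cg ch c0 cq =
  ifE (lessE (Var 0) (Num 2)) (pairE (Num 0) (Var 1))
    (pairE (Num 1)
      (ifE (eqE (mod2E (Var 1)) (Num 0))
        (pairE (Num 0) (pairE (ifE (eqE (mod2E (Var 0)) (Num 0)) (Num cg) (Num ch)) (div2E (Var 1))))
        (ifE (eqE (div2E (Var 0)) (Num 1))
          (pairE (Num 0) (pairE (Num c0) (div2E (Var 1))))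
          (pairE (Mul (Num 2) (Sub (div2E (Var 0)) (Num 1))) (pairE (Num cq) (div2E (Var 1)))))))"

lemma expr_val_route_tower:
  "expr_val A [L, x] (route_tower cg ch c0 cq) =
   (if L < 2 then prod_encode (0, x) else prod_encode (1,
      if even x then prod_encode (0, prod_encode (if even L then cg else ch, x div 2))
      else if L div 2 = 1 then prod_encode (0, prod_encode (c0, x div 2))
      else prod_encode (2 * (L div 2 - 1), prod_encode (cq, x div 2))))"
  by (simp add: route_tower_def even_iff_mod_2_eq_zero)

lemma oracle_routing_tower:
  assumes g: "\<And>n. eval (chi Y) pg [n] (g n)" and h: "\<And>n. eval (chi Y) ph [n] (h n)"
    and F0: "\<And>n. eval (chi Y) p0 [n] (F 0 n)"
    and FSuc: "\<And>m n. eval (join g (F m)) q [n] (F (Suc m) n)"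
  shows "oracle_routing (chi Y)
    (\<lambda>L x. expr_val (chi Y) [L, x] (route_tower (code pg) (code ph) (code p0) (code q))) (tower g h F Y)"
proof
  fix L x
  let ?q = "expr_val (chi Y) [L, x] (route_tower (code pg) (code ph) (code p0) (code q))"
  show "fst_code ?q = 0 \<Longrightarrow> tower g h F Y L x = chi Y (snd_code ?q)"
    by (auto simp: expr_val_route_tower tower_def split: if_splits)
  show "fst_code ?q \<noteq> 0 \<Longrightarrow> route_level ?q < L"
    by (auto simp: expr_val_route_tower)
  assume "fst_code ?q \<noteq> 0"
  then have L: "\<not> L < 2" by (auto simp: expr_val_route_tower)
  show "\<exists>p. code p = route_prog ?q \<and> eval (tower g h F Y (route_level ?q)) p [route_arg ?q] (tower g h F Y L x)"
  proof (cases "even x")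
    case True
    then show ?thesis using L g h by (auto simp: expr_val_route_tower tower_def join_def)
  next
    case odd: False
    show ?thesis
    proof (cases "L div 2 = 1")
      case True
      then show ?thesis using L odd F0 by (auto simp: expr_val_route_tower tower_def join_def)
    next
      case False
      then have "Suc (L div 2 - 1 - 1) = L div 2 - 1" and "tower g h F Y (2 * (L div 2 - 1)) = join g (F (L div 2 - 1 - 1))"
        using L by (auto simp: tower_def)
      then have "eval (tower g h F Y (2 * (L div 2 - 1))) q [x div 2] (F (L div 2 - 1) (x div 2))"
        using FSuc[of "L div 2 - 1 - 1" "x div 2"] by simp
      then show ?thesis using L odd False by (auto simp: expr_val_route_tower tower_def join_def)
    qed
  qed
qed

lemma K2_carrier_program:
  assumes "g \<in> K2_carrier Y"
  obtains p where "\<And>n. eval (chi Y) p [n] (g n)"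
  using assms Phi_total_program unfolding K2_carrier_def by blast

lemma app2_program:
  assumes "\<And>m. app2 g (F m) = Some (G m)"
  obtains q where "\<And>m n. eval (join g (F m)) q [n] (G m n)"
proof -
  have Phi: "Phi (join g (F m)) (g 0) n (G m n)" for m n
    using app2_eq_SomeD[OF assms] .
  from Phi obtain q where "code q = g 0" unfolding Phi_def by blast
  with Phi Phi_codeD that show ?thesis by blast
qed

lemma embedding_app2_code:
  assumes "embedding_K1_K2 X Y f"
  shows "app2 (f (code S)) (f m) = Some (f (Suc m))"
    and "app2 (f (code Orc)) (f m) = Some (f (chi X m))"
  using assms unfolding embedding_K1_K2_def app1_eq_Some_iff
  by (blast intro: Phi_I eval_S eval_Orc)+

lemma turing_le_of_separated_values:
  assumes U: "\<And>m. eval (chi Y) U [m] (G (chi X m))" and sep: "G 0 \<noteq> G 1"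
  shows "turing_le X Y"
proof -
  have "eval (chi Y) (Comp (compile 2 (eqE (Var 1) (Num (G 1)))) [Proj 0, U]) [m] (chi X m)" for m
    by (rule eval_Comp2[OF eval_ProjI U]) (use sep in \<open>auto intro!: eval_compile simp: chi_def\<close>)
  then show ?thesis unfolding turing_le_def by (blast intro: Phi_I)
qed

theorem turing_le_of_embedding:
  assumes emb: "embedding_K1_K2 X Y f"
  shows "turing_le X Y"
proof -
  have carrier: "\<And>a. f a \<in> K2_carrier Y" and "inj f"
    using emb unfolding embedding_K1_K2_def by blast+
  obtain pS where "\<And>n. eval (chi Y) pS [n] (f (code S) n)"
    using carrier[of "code S"] by (rule K2_carrier_program) auto
  moreover obtain pO where "\<And>n. eval (chi Y) pO [n] (f (code Orc) n)"
    using carrier[of "code Orc"] by (rule K2_carrier_program) auto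
  moreover obtain p0 where "\<And>n. eval (chi Y) p0 [n] (f 0 n)"
    using carrier[of 0] by (rule K2_carrier_program) auto
  moreover obtain qS where "\<And>m n. eval (join (f (code S)) (f m)) qS [n] (f (Suc m) n)"
    using embedding_app2_code(1)[OF emb] by (rule app2_program[where F = f]) auto
  ultimately have routing: "oracle_routing (chi Y)
      (\<lambda>L x. expr_val (chi Y) [L, x] (route_tower (code pS) (code pO) (code p0) (code qS)))
      (tower (f (code S)) (f (code Orc)) f Y)"
    by (rule oracle_routing_tower)
  obtain qO where "\<And>m n. eval (join (f (code Orc)) (f m)) qO [n] (f (chi X m) n)"
    using embedding_app2_code(2)[OF emb] by (rule app2_program[where F = f]) auto
  then have "eval (tower (f (code S)) (f (code Orc)) f Y (2 * m + 3)) qO [d] (f (chi X m) d)" for m d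
    by (simp add: tower_def)
  from eval_universal_prog[OF routing this]
  have "eval (chi Y) (Comp (universal_prog (route_tower (code pS) (code pO) (code p0) (code qS)))
      [compile 1 (Add (Mul (Num 2) (Var 0)) (Num 3)), const_prog (code qO), const_prog d]) [m] (f (chi X m) d)"
    for m d
    by (rule eval_Comp3[OF _ eval_const_prog eval_const_prog, rotated]) (rule eval_compile; simp)
  moreover from \<open>inj f\<close> obtain d where "f 0 d \<noteq> f 1 d"
    by (metis injD zero_neq_one ext)
  ultimately show ?thesis by (rule turing_le_of_separated_values)
qed

theorem theorem6p7:
  fixes X Y :: "nat set"
  shows "(\<exists>f. embedding_K1_K2 X Y f) \<longleftrightarrow> turing_le X Y"
  using turing_le_of_embedding embedding_of_turing_le by blast

end
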